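(* Let $a\in\mathbb{R}$ with $a\ge1$ and let $n,s,t\in\mathbb{N}$ with $1\le s\le t\le n$. Assume $as+t\ge n$, $t\ge as$ and $s+as\le t$. Then the number $\mathcal{M}^{(a)}(n,s,t)$ of monochromatic generalized Schur triples of $\{1,\dots,n\}$ under the coloring $R^sB^{t-s}R^{n-t}$ equals \[ \sum_{y=1}^{\lfloor s/a\rfloor}\ \sum_{x=1}^{s-\lfloor ay\rfloor}1\;+\sum_{y=s+1}^{\lfloor (t-s)/a\rfloor}\ \sum_{x=s+1}^{t-\lfloor ay\rfloor}1\;+\sum_{y=1}^{\lfloor (n-t)/a\rfloor}\ \sum_{x=t+1}^{n-\lfloor ay\rfloor}1\;+\sum_{y=t+1}^{\lfloor n/a\rfloor}\ \sum_{x=1}^{n-\lfloor ay\rfloor}1 , \] and the monochromatic generalized Schur triples are exactly the triples $(x,y,x+\lfloor ay\rfloor)$ with $(x,y)$ ranging over the index pairs of these four double sums.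
   Context: For real $a>0$, a generalized Schur triple on $[n]=\{1,\dots,n\}$ is an ordered triple $T=(x,y,x+\lfloor ay\rfloor)\in[n]^3$. The coloring $R^sB^{t-s}R^{n-t}$ colors $1,\dots,s$ and $t+1,\dots,n$ red and $s+1,\dots,t$ blue; $T$ is monochromatic if $T\in(\{1,\dots,s\}\cup\{t+1,\dots,n\})^3$ or $T\in\{s+1,\dots,t\}^3$, and $\mathcal{M}^{(a)}(n,s,t)$ is the number of such $T$. Convention: a sum whose lower bound exceeds its upper bound is $0$. *)

theory Defs
  imports Complex_Main
begin

definition gen_schur_triples :: "real \<Rightarrow> nat \<Rightarrow> (int \<times> int \<times> int) set" where
  "gen_schur_triples a n =
     {(x, y, z). x \<in> {1..int n} \<and> y \<in> {1..int n} \<and> z \<in> {1..int n} \<and>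
                 z = x + \<lfloor>a * of_int y\<rfloor>}"

definition red_set :: "nat \<Rightarrow> nat \<Rightarrow> nat \<Rightarrow> int set" where
  "red_set n s t = {1..int s} \<union> {int t + 1..int n}"

definition blue_set :: "nat \<Rightarrow> nat \<Rightarrow> int set" where
  "blue_set s t = {int s + 1..int t}"

definition mono_triples :: "real \<Rightarrow> nat \<Rightarrow> nat \<Rightarrow> nat \<Rightarrow> (int \<times> int \<times> int) set" where
  "mono_triples a n s t =
     {T \<in> gen_schur_triples a n.
        T \<in> red_set n s t \<times> red_set n s t \<times> red_set n s t \<or>
        T \<in> blue_set s t \<times> blue_set s t \<times> blue_set s t}"

definition M :: "real \<Rightarrow> nat \<Rightarrow> nat \<Rightarrow> nat \<Rightarrow> nat" where
  "M a n s t = card (mono_triples a n s t)"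

end

(* A triple (x, y, x + \<lfloor>a y\<rfloor>) is determined by (x, y), so it suffices to describe the
   admissible pairs.  Since a s + s \<le> t, a red triple with x, y \<le> s cannot jump over the blue
   block and stays inside {1..s}; since n \<le> a s + t \<le> 2 t, a red triple with y > t has x \<le> s,
   and one with x > t has y \<le> s.  Hence the monochromatic triples fall into four disjoint
   families (all in the first red block; all blue; x and z in the last red block; y and z in the
   last red block), and counting the admissible x for each y gives the four double sums. *)

theory Submission
  imports Defs
begin

lemma le_mult_of_int:
  fixes a :: real and y :: int
  assumes "1 \<le> a" and "0 \<le> y"
  shows "of_int y \<le> a * of_int y"
  using assms by (simp add: mult_le_cancel_right1)

lemma le_floor_mult:
  fixes a :: real and y :: int
  assumes "1 \<le> a" and "0 \<le> y"
  shows "y \<le> \<lfloor>a * of_int y\<rfloor>"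
  using le_mult_of_int[OF assms] by (simp add: le_floor_iff)

lemma le_floor_divide_iff:
  fixes a c :: real and y :: int
  assumes "0 < a"
  shows "y \<le> \<lfloor>c / a\<rfloor> \<longleftrightarrow> a * of_int y \<le> c"
  using assms by (simp add: le_floor_iff pos_le_divide_eq mult.commute)

definition schur_pairs :: "real \<Rightarrow> int set \<Rightarrow> int \<Rightarrow> int \<Rightarrow> (int \<times> int) set" where
  "schur_pairs a Y l u = {(x, y). y \<in> Y \<and> x \<in> {l..u - \<lfloor>a * of_int y\<rfloor>}}"

lemma mem_schur_pairs:
  "(x, y) \<in> schur_pairs a Y l u \<longleftrightarrow> y \<in> Y \<and> l \<le> x \<and> x + \<lfloor>a * of_int y\<rfloor> \<le> u"
  by (auto simp: schur_pairs_def)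

lemma schur_pairs_eq_image:
  "schur_pairs a Y l u = (\<lambda>(y, x). (x, y)) ` (SIGMA y:Y. {l..u - \<lfloor>a * of_int y\<rfloor>})"
  by (auto simp: schur_pairs_def)

lemma finite_schur_pairs: "finite Y \<Longrightarrow> finite (schur_pairs a Y l u)"
  by (simp add: schur_pairs_eq_image)

lemma card_schur_pairs:
  assumes "finite Y"
  shows "int (card (schur_pairs a Y l u)) = (\<Sum>y\<in>Y. \<Sum>x\<in>{l..u - \<lfloor>a * of_int y\<rfloor>}. (1::int))"
proof -
  have "card (schur_pairs a Y l u) = (\<Sum>y\<in>Y. card {l..u - \<lfloor>a * of_int y\<rfloor>})"
    using assms by (simp add: schur_pairs_eq_image card_image inj_on_def card_SigmaI)
  then show ?thesis by simp
qed

definition mono_schur_pairs :: "real \<Rightarrow> nat \<Rightarrow> nat \<Rightarrow> nat \<Rightarrow> (int \<times> int) set" where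
  "mono_schur_pairs a n s t =
     schur_pairs a {1..\<lfloor>real s / a\<rfloor>} 1 (int s)
   \<union> schur_pairs a {int s + 1..\<lfloor>real (t - s) / a\<rfloor>} (int s + 1) (int t)
   \<union> schur_pairs a {1..\<lfloor>real (n - t) / a\<rfloor>} (int t + 1) (int n)
   \<union> schur_pairs a {int t + 1..\<lfloor>real n / a\<rfloor>} 1 (int n)"

lemma mem_mono_triples:
  "(x, y, z) \<in> mono_triples a n s t \<longleftrightarrow>
     z = x + \<lfloor>a * of_int y\<rfloor> \<and> x \<in> {1..int n} \<and> y \<in> {1..int n} \<and> z \<in> {1..int n} \<and>
     ((x \<in> red_set n s t \<and> y \<in> red_set n s t \<and> z \<in> red_set n s t) \<or>
      (x \<in> blue_set s t \<and> y \<in> blue_set s t \<and> z \<in> blue_set s t))"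
  by (auto simp: mono_triples_def gen_schur_triples_def)

context
  fixes a :: real and n s t :: nat
  assumes a_ge_1: "1 \<le> a"
    and t_le_n: "t \<le> n"
    and n_le: "real n \<le> a * real s + real t"
    and s_le: "real s + a * real s \<le> real t"
begin

lemma s_le_t: "s \<le> t"
proof -
  have "0 \<le> a * real s" using a_ge_1 by simp
  then have "real s \<le> real t" using s_le by linarith
  then show ?thesis by simp
qed

lemma mem_mono_schur_pairs:
  fixes x y :: int
  shows "(x, y) \<in> mono_schur_pairs a n s t \<longleftrightarrow>
     (1 \<le> y \<and> a * y \<le> s \<and> 1 \<le> x \<and> x + \<lfloor>a * of_int y\<rfloor> \<le> s) \<or>
     (s < y \<and> a * y \<le> real t - real s \<and> s < x \<and> x + \<lfloor>a * of_int y\<rfloor> \<le> t) \<or>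
     (1 \<le> y \<and> a * y \<le> real n - real t \<and> t < x \<and> x + \<lfloor>a * of_int y\<rfloor> \<le> n) \<or>
     (t < y \<and> a * y \<le> n \<and> 1 \<le> x \<and> x + \<lfloor>a * of_int y\<rfloor> \<le> n)"
proof -
  have "real (t - s) = real t - real s" "real (n - t) = real n - real t"
    using s_le_t t_le_n by (simp_all add: of_nat_diff)
  moreover have "0 < a" using a_ge_1 by simp
  ultimately show ?thesis
    unfolding mono_schur_pairs_def by (auto simp: mem_schur_pairs le_floor_divide_iff)
qed

lemma mono_triple_imp_mono_schur_pairs:
  assumes "(x, y, x + \<lfloor>a * of_int y\<rfloor>) \<in> mono_triples a n s t"
  shows "(x, y) \<in> mono_schur_pairs a n s t"
proof -
  define F where "F = \<lfloor>a * of_int y\<rfloor>"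
  have F_gt: "a * of_int y < of_int F + 1"
    unfolding F_def by (rule real_of_int_floor_add_one_gt)
  have F_le: "of_int F \<le> a * of_int y"
    unfolding F_def by (rule of_int_floor_le)
  have range: "1 \<le> x" "1 \<le> y" "x + F \<le> n"
    and colours: "(x \<in> red_set n s t \<and> y \<in> red_set n s t \<and> x + F \<in> red_set n s t) \<or>
       (x \<in> blue_set s t \<and> y \<in> blue_set s t \<and> x + F \<in> blue_set s t)"
    using assms unfolding mem_mono_triples F_def by auto
  have as_le: "a * real s \<le> real t - real s" using s_le by simp
  consider (blue) "s < x" "s < y" "x + F \<le> t"
    | (red_small) "y \<le> s" "x \<le> s" "x + F \<le> s \<or> t < x + F"
    | (red_outer) "y \<le> s" "t < x"
    | (red_large) "t < y"
    using colours by (auto simp: red_set_def blue_set_def)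
  then show ?thesis
  proof cases
    case blue
    then have "a * of_int y \<le> real t - real s" using F_gt by linarith
    then show ?thesis using blue unfolding mem_mono_schur_pairs F_def by blast
  next
    case red_small
    have "a * of_int y \<le> a * real s"
      using red_small(1) a_ge_1 by (simp add: mult_left_mono)
    then have "x + F \<le> s"
      using red_small F_le as_le by linarith
    moreover from this have "a * of_int y \<le> s" using F_gt range by linarith
    ultimately show ?thesis using range unfolding mem_mono_schur_pairs F_def by blast
  next
    case red_outer
    then have "a * of_int y \<le> real n - real t" using F_gt range by linarith
    then show ?thesis using red_outer range unfolding mem_mono_schur_pairs F_def by blast
  next
    case red_large
    have "a * of_int y \<le> n" using F_gt range by linarith
    then show ?thesis using red_large range unfolding mem_mono_schur_pairs F_def by blast
  qed
qed

lemma mono_schur_pairs_imp_mono_triple: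
  assumes "(x, y) \<in> mono_schur_pairs a n s t"
  shows "(x, y, x + \<lfloor>a * of_int y\<rfloor>) \<in> mono_triples a n s t"
proof -
  define F where "F = \<lfloor>a * of_int y\<rfloor>"
  have F_gt: "a * of_int y < of_int F + 1"
    unfolding F_def by (rule real_of_int_floor_add_one_gt)
  have y_le_ay: "1 \<le> y \<Longrightarrow> of_int y \<le> a * of_int y"
    using a_ge_1 by (simp add: le_mult_of_int)
  have y_le_F: "1 \<le> y \<Longrightarrow> y \<le> F"
    unfolding F_def using a_ge_1 by (simp add: le_floor_mult)
  from assms consider
      (small) "1 \<le> y" "a * y \<le> s" "1 \<le> x" "x + F \<le> s"
    | (blue) "s < y" "a * y \<le> real t - real s" "s < x" "x + F \<le> t"
    | (outer) "1 \<le> y" "a * y \<le> real n - real t" "t < x" "x + F \<le> n"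
    | (large) "t < y" "a * y \<le> n" "1 \<le> x" "x + F \<le> n"
    unfolding mem_mono_schur_pairs F_def by blast
  then show ?thesis
  proof cases
    case small
    then show ?thesis
      using y_le_ay y_le_F s_le_t t_le_n
      unfolding mem_mono_triples F_def[symmetric] by (auto simp: red_set_def)
  next
    case blue
    then show ?thesis
      using y_le_ay y_le_F t_le_n
      unfolding mem_mono_triples F_def[symmetric] by (auto simp: blue_set_def)
  next
    case outer
    have "a * of_int y \<le> a * real s" using outer(2) n_le by linarith
    then have "y \<le> s" using a_ge_1 by simp
    then show ?thesis
      using outer y_le_F s_le_t
      unfolding mem_mono_triples F_def[symmetric] by (auto simp: red_set_def)
  next
    case large
    txt \<open>x is red: F > a (t + 1) - 1 \<ge> a s + t - s, so x \<le> n - F < s by n \<le> a s + t.\<close>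
    have "a * of_int y \<ge> a * (real t + 1)"
      using large(1) a_ge_1 by (simp add: mult_left_mono)
    moreover have "(a - 1) * (real t + 1 - real s) \<ge> 0"
      using a_ge_1 s_le_t by simp
    ultimately have "x \<le> s"
      using large F_gt n_le by (simp add: algebra_simps)
    then show ?thesis
      using large y_le_ay y_le_F
      unfolding mem_mono_triples F_def[symmetric] by (auto simp: red_set_def)
  qed
qed

lemma mono_triples_eq_image:
  "mono_triples a n s t =
     (\<lambda>(x, y). (x, y, x + \<lfloor>a * of_int y\<rfloor>)) ` mono_schur_pairs a n s t"
proof (intro equalityI subsetI)
  fix T assume T: "T \<in> mono_triples a n s t"
  then obtain x y where "T = (x, y, x + \<lfloor>a * of_int y\<rfloor>)"
    by (cases T) (auto simp: mem_mono_triples)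
  with T show "T \<in> (\<lambda>(x, y). (x, y, x + \<lfloor>a * of_int y\<rfloor>)) ` mono_schur_pairs a n s t"
    using mono_triple_imp_mono_schur_pairs by auto
qed (auto intro: mono_schur_pairs_imp_mono_triple)

lemma schur_pairs_pieces_disjoint:
  defines "P1 \<equiv> schur_pairs a {1..\<lfloor>real s / a\<rfloor>} 1 (int s)"
    and "P2 \<equiv> schur_pairs a {int s + 1..\<lfloor>real (t - s) / a\<rfloor>} (int s + 1) (int t)"
    and "P3 \<equiv> schur_pairs a {1..\<lfloor>real (n - t) / a\<rfloor>} (int t + 1) (int n)"
    and "P4 \<equiv> schur_pairs a {int t + 1..\<lfloor>real n / a\<rfloor>} 1 (int n)"
  shows "P1 \<inter> P2 = {}" "(P1 \<union> P2) \<inter> P3 = {}" "(P1 \<union> P2 \<union> P3) \<inter> P4 = {}"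
proof -
  have a_pos: "0 < a" using a_ge_1 by simp
  have y_le_ay: "of_int y \<le> a * of_int y" if "1 \<le> y" for y :: int
    using that a_ge_1 by (simp add: le_mult_of_int)
  have in_P1: "y \<le> s \<and> x \<le> t" if "(x, y) \<in> P1" for x y :: int
  proof -
    have "1 \<le> y" "a * of_int y \<le> s" "x + \<lfloor>a * of_int y\<rfloor> \<le> s"
      using that by (auto simp: P1_def mem_schur_pairs le_floor_divide_iff[OF a_pos])
    moreover have "0 \<le> \<lfloor>a * of_int y\<rfloor>" using \<open>1 \<le> y\<close> a_pos by simp
    ultimately show ?thesis using y_le_ay[of y] s_le_t by linarith
  qed
  have in_P2: "s < y \<and> y \<le> t" if "(x, y) \<in> P2" for x y :: int
  proof -
    have "s < y" "a * of_int y \<le> real t - real s"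
      using that s_le_t by (auto simp: P2_def mem_schur_pairs le_floor_divide_iff[OF a_pos] of_nat_diff)
    then show ?thesis using y_le_ay[of y] by linarith
  qed
  have in_P3: "y \<le> s \<and> t < x" if "(x, y) \<in> P3" for x y :: int
  proof -
    have "1 \<le> y" "a * of_int y \<le> a * real s" "t < x"
      using that n_le t_le_n by (auto simp: P3_def mem_schur_pairs le_floor_divide_iff[OF a_pos] of_nat_diff)
    then show ?thesis using a_pos by simp
  qed
  have in_P4: "s < y \<and> t < y" if "(x, y) \<in> P4" for x y :: int
    using that s_le_t by (simp add: P4_def mem_schur_pairs)
  show "P1 \<inter> P2 = {}" "(P1 \<union> P2) \<inter> P3 = {}" "(P1 \<union> P2 \<union> P3) \<inter> P4 = {}"
    by (auto dest!: in_P1 in_P2 in_P3 in_P4)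
qed

lemma card_mono_schur_pairs:
  "int (card (mono_schur_pairs a n s t)) =
      (\<Sum>y\<in>{1..\<lfloor>real s / a\<rfloor>}. \<Sum>x\<in>{1..int s - \<lfloor>a * of_int y\<rfloor>}. (1::int))
    + (\<Sum>y\<in>{int s + 1..\<lfloor>real (t - s) / a\<rfloor>}. \<Sum>x\<in>{int s + 1..int t - \<lfloor>a * of_int y\<rfloor>}. (1::int))
    + (\<Sum>y\<in>{1..\<lfloor>real (n - t) / a\<rfloor>}. \<Sum>x\<in>{int t + 1..int n - \<lfloor>a * of_int y\<rfloor>}. (1::int))
    + (\<Sum>y\<in>{int t + 1..\<lfloor>real n / a\<rfloor>}. \<Sum>x\<in>{1..int n - \<lfloor>a * of_int y\<rfloor>}. (1::int))"
proof -
  let ?P1 = "schur_pairs a {1..\<lfloor>real s / a\<rfloor>} 1 (int s)"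
  let ?P2 = "schur_pairs a {int s + 1..\<lfloor>real (t - s) / a\<rfloor>} (int s + 1) (int t)"
  let ?P3 = "schur_pairs a {1..\<lfloor>real (n - t) / a\<rfloor>} (int t + 1) (int n)"
  let ?P4 = "schur_pairs a {int t + 1..\<lfloor>real n / a\<rfloor>} 1 (int n)"
  have "card (mono_schur_pairs a n s t) = card ?P1 + card ?P2 + card ?P3 + card ?P4"
    using schur_pairs_pieces_disjoint unfolding mono_schur_pairs_def
    by (simp add: card_Un_disjoint finite_schur_pairs)
  then show ?thesis by (simp add: card_schur_pairs)
qed

end

theorem lemma4p1:
  fixes a :: real and n s t :: nat
  assumes "a \<ge> 1" and "1 \<le> s" and "s \<le> t" and "t \<le> n"
    and "a * real s + real t \<ge> real n"
    and "real t \<ge> a * real s"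
    and "real s + a * real s \<le> real t"
  shows "(int (M a n s t) =
      (\<Sum>y\<in>{1..\<lfloor>real s / a\<rfloor>}. \<Sum>x\<in>{1..int s - \<lfloor>a * of_int y\<rfloor>}. (1::int))
    + (\<Sum>y\<in>{int s + 1..\<lfloor>real (t - s) / a\<rfloor>}. \<Sum>x\<in>{int s + 1..int t - \<lfloor>a * of_int y\<rfloor>}. (1::int))
    + (\<Sum>y\<in>{1..\<lfloor>real (n - t) / a\<rfloor>}. \<Sum>x\<in>{int t + 1..int n - \<lfloor>a * of_int y\<rfloor>}. (1::int))
    + (\<Sum>y\<in>{int t + 1..\<lfloor>real n / a\<rfloor>}. \<Sum>x\<in>{1..int n - \<lfloor>a * of_int y\<rfloor>}. (1::int))) \<and>
    mono_triples a n s t =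
      (\<lambda>(x, y). (x, y, x + \<lfloor>a * of_int y\<rfloor>)) `
        ({(x, y). y \<in> {1..\<lfloor>real s / a\<rfloor>} \<and> x \<in> {1..int s - \<lfloor>a * of_int y\<rfloor>}}
       \<union> {(x, y). y \<in> {int s + 1..\<lfloor>real (t - s) / a\<rfloor>} \<and> x \<in> {int s + 1..int t - \<lfloor>a * of_int y\<rfloor>}}
       \<union> {(x, y). y \<in> {1..\<lfloor>real (n - t) / a\<rfloor>} \<and> x \<in> {int t + 1..int n - \<lfloor>a * of_int y\<rfloor>}}
       \<union> {(x, y). y \<in> {int t + 1..\<lfloor>real n / a\<rfloor>} \<and> x \<in> {1..int n - \<lfloor>a * of_int y\<rfloor>}})"
proof -
  note hyps = assms(1,4,5,7)
  have "M a n s t = card (mono_schur_pairs a n s t)"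
    unfolding M_def mono_triples_eq_image[OF hyps] by (rule card_image) (auto simp: inj_on_def)
  with card_mono_schur_pairs[OF hyps] mono_triples_eq_image[OF hyps] show ?thesis
    unfolding mono_schur_pairs_def schur_pairs_def by (intro conjI) (simp_all only:)
qed

end
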